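(* For $t\ge t_0$ let $$\epsilon_r(t):=\min\Big\{\frac{(e^{wT_b(t)}-1)(w+\mu)}{W(e^{(w+\mu)T_b(t)}-1)},\ e^{-\bar\mu T_b(t)}\Big\}.$$ Suppose there is no controller update time in $(\tau_l(t),\tau_u(t)]$, that $\|x_e(s)\|_\infty\le d_e(s)$ for all $s$, that $\epsilon(\tau_l(t))\le\epsilon_r(t)$ and that $h_{\rm pf}(\tau_l(t))\le1$. Then $h_{\rm pf}(s)\le1$ for all $s\in[\tau_l(t),\tau_u(t)]$ and $h_{\rm ch}(\tau_u(t))\le1$; in particular $\epsilon(\tau_u(t))\le1$.
   Context: Parameters. $A\in\mathbb{R}^{n\times n}$, $B$, $K$ with $\bar A=A+BK$ Hurwitz; $Q$ symmetric positive definite, $P$ the symmetric positive definite solution of $P\bar A+\bar A^\top P=-Q$, $V(x)=x^\top Px$; $t_0\ge0$, $V_d(t_0)>0$, $\beta>0$, $a>1$ with $W:=\lambda_m(Q)/\lambda_M(P)-a\beta>0$, $V_d(t)=V_d(t_0)e^{-\beta(t-t_0)}$; $w:=\lambda_m(Q)/\lambda_M(P)-\beta$, $\mu:=\|A\|_2+\beta/2$, $\bar\mu:=\|A\|_\infty+\beta/2$, $c:=W\sqrt{\lambda_m(P)}/(2\sqrt n\|PBK\|_2)$, $T>0$, $\rho_T(h_0):=\frac{(w+\mu)(1-h_0)}{W(e^{(w+\mu)T}-1)}+1$. Closed loop: plant $\dot x=Ax+Bu$, $u=K\hat x$, with $\dot{\hat x}=\bar A\hat x$ between controller update times $\tilde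 r_k$ (at which $\hat x$ jumps); $x_e:=x-\hat x$; $d_e(t):=\|e^{A(t-t_k)}\|_\infty\delta_k$ for $t\in[\tilde r_k,\tilde r_{k+1})$, where $t_k\le\tilde r_k$ is the transmission time of the $k$-th packet of $np_k$ bits, $\delta_{k+1}=2^{-p_{k+1}}d_e(t_{k+1})$. $h_{\rm pf}(t):=V(x(t))/V_d(t)$, $\epsilon(t):=d_e(t)/(c\sqrt{V_d(t)})$, $h_{\rm ch}(t):=\epsilon(t)/\rho_T(h_{\rm pf}(t))$. Channel blackouts: the channel's maximum packet-size function $\bar p:\mathbb{R}_{\ge0}\to\mathbb{Z}_{\ge0}$ is constant on slots $(\theta_j,\theta_{j+1}]$; a blackout is a slot with $\bar p=0$. $\tau_l(t):=\inf\{s\ge t:\bar p(s)=0\}$, $\tau_u(t):=\inf\{s\ge\tau_l(t):\bar p(s)>0\}$ (start and end of the next blackout), $T_b(t):=\tau_u(t)-\tau_l(t)$. *)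

theory Defs
  imports "HOL-Analysis.Analysis"
begin

primrec mpow :: "real^'n^'n \<Rightarrow> nat \<Rightarrow> real^'n^'n" where
  "mpow M 0 = mat 1"
| "mpow M (Suc k) = M ** mpow M k"

definition mexp :: "real^'n^'n \<Rightarrow> real^'n^'n" where
  "mexp M = (\<Sum>k. (1 / fact k) *\<^sub>R mpow M k)"

definition real_eigenvalues :: "real^'n^'n \<Rightarrow> real set" where
  "real_eigenvalues M = {l. \<exists>v. v \<noteq> 0 \<and> M *v v = l *\<^sub>R v}"

definition lam_min :: "real^'n^'n \<Rightarrow> real" where
  "lam_min M = Inf (real_eigenvalues M)"

definition lam_max :: "real^'n^'n \<Rightarrow> real" where
  "lam_max M = Sup (real_eigenvalues M)"

definition hurwitz :: "real^'n^'n \<Rightarrow> bool" where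
  "hurwitz M \<longleftrightarrow> (\<forall>l (v::complex^'n). v \<noteq> 0 \<and>
      (\<chi> i j. complex_of_real (M$i$j)) *v v = l *s v \<longrightarrow> Re l < 0)"

definition symmetric_mat :: "real^'n^'n \<Rightarrow> bool" where
  "symmetric_mat M \<longleftrightarrow> transpose M = M"

definition pos_def :: "real^'n^'n \<Rightarrow> bool" where
  "pos_def M \<longleftrightarrow> symmetric_mat M \<and> (\<forall>x. x \<noteq> 0 \<longrightarrow> x \<bullet> (M *v x) > 0)"

definition norm2 :: "real^'m^'n \<Rightarrow> real" where
  "norm2 M = onorm (\<lambda>x. M *v x)"

definition norminf :: "real^'m^'n \<Rightarrow> real" where
  "norminf M = Max (range (\<lambda>i. \<Sum>j\<in>UNIV. \<bar>M$i$j\<bar>))"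

definition tau_l :: "(real \<Rightarrow> nat) \<Rightarrow> real \<Rightarrow> real" where
  "tau_l pbar t = Inf {s. s \<ge> t \<and> pbar s = 0}"

definition tau_u :: "(real \<Rightarrow> nat) \<Rightarrow> real \<Rightarrow> real" where
  "tau_u pbar t = Inf {s. s \<ge> tau_l pbar t \<and> pbar s > 0}"

definition T_b :: "(real \<Rightarrow> nat) \<Rightarrow> real \<Rightarrow> real" where
  "T_b pbar t = tau_u pbar t - tau_l pbar t"

end

theory Submission
  imports Defs
begin

text \<open>During a blackout the controller runs open loop, so the estimation error \<open>x - x\<^sub>h\<close> obeys
  \<open>e' = A e\<close> and grows at most like \<open>e^{\<parallel>A\<parallel>\<^sub>2 s}\<close>. Along the plant trajectory the ratio \<open>h = V / V\<^sub>d\<close>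
  then satisfies \<open>h' \<le> -w h + W \<epsilon>(\<tau>\<^sub>l) e^{\<mu>(s - \<tau>\<^sub>l)} \<surd>h\<close>. Near \<open>h = 1\<close> the square root is
  majorized by \<open>(1 + h) / 2\<close>, and comparison with the solution of the resulting linear equation
  gives \<open>h \<le> 1\<close> on the whole blackout provided \<open>\<epsilon>(\<tau>\<^sub>l)\<close> is below the first term of \<open>\<epsilon>\<^sub>r\<close>.
  The second term of \<open>\<epsilon>\<^sub>r\<close> absorbs the growth of \<open>\<epsilon>\<close> itself: \<open>d\<^sub>e\<close> grows at most like
  \<open>e^{\<parallel>A\<parallel>\<^sub>\<infinity> T\<^sub>b}\<close> while \<open>\<surd>V\<^sub>d\<close> decays like \<open>e^{-\<beta> T\<^sub>b / 2}\<close>.\<close>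

section \<open>The matrix exponential\<close>

text \<open>Square real matrices are not a normed algebra in the library, so they are transported to
  bounded linear endomorphisms, where \<open>exp\<close> and its derivative are available.\<close>

typedef (overloaded) 'n linop = "UNIV :: ((real^'n::finite) \<Rightarrow>\<^sub>L (real^'n)) set" by auto
setup_lifting type_definition_linop

instantiation linop :: (finite) real_normed_algebra_1
begin
lift_definition norm_linop :: "'a linop \<Rightarrow> real" is norm .
lift_definition minus_linop :: "'a linop \<Rightarrow> 'a linop \<Rightarrow> 'a linop" is minus .
lift_definition plus_linop :: "'a linop \<Rightarrow> 'a linop \<Rightarrow> 'a linop" is plus .
lift_definition uminus_linop :: "'a linop \<Rightarrow> 'a linop" is uminus .
lift_definition zero_linop :: "'a linop" is 0 .
lift_definition scaleR_linop :: "real \<Rightarrow> 'a linop \<Rightarrow> 'a linop" is scaleR .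
lift_definition times_linop :: "'a linop \<Rightarrow> 'a linop \<Rightarrow> 'a linop" is blinfun_compose .
lift_definition one_linop :: "'a linop" is id_blinfun .
definition dist_linop :: "'a linop \<Rightarrow> 'a linop \<Rightarrow> real"
  where "dist_linop a b = norm (a - b)"
definition uniformity_linop :: "('a linop \<times> 'a linop) filter"
  where "uniformity_linop = (INF e\<in>{0 <..}. principal {(x, y). dist x y < e})"
definition open_linop :: "'a linop set \<Rightarrow> bool"
  where "open_linop S = (\<forall>x\<in>S. \<forall>\<^sub>F (x', y) in uniformity. x' = x \<longrightarrow> y \<in> S)"
definition sgn_linop :: "'a linop \<Rightarrow> 'a linop"
  where "sgn_linop x = scaleR (inverse (norm x)) x"
instance
proof
  fix a b c :: "'a linop" and r s :: real
  show "a + b + c = a + (b + c)" by transfer (simp add: algebra_simps)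
  show "a + b = b + a" by transfer (simp add: algebra_simps)
  show "0 + a = a" by transfer simp
  show "- a + a = 0" by transfer simp
  show "a - b = a + - b" by transfer simp
  show "r *\<^sub>R (a + b) = r *\<^sub>R a + r *\<^sub>R b" by transfer (simp add: scaleR_add_right)
  show "(r + s) *\<^sub>R a = r *\<^sub>R a + s *\<^sub>R a" by transfer (simp add: scaleR_add_left)
  show "r *\<^sub>R s *\<^sub>R a = (r * s) *\<^sub>R a" by transfer simp
  show "1 *\<^sub>R a = a" by transfer simp
  show "a * b * c = a * (b * c)" by transfer (rule blinfun_eqI, simp)
  show "(a + b) * c = a * c + b * c"
    by transfer (rule blinfun_eqI, simp add: blinfun.bilinear_simps)
  show "a * (b + c) = a * b + a * c"
    by transfer (rule blinfun_eqI, simp add: blinfun.bilinear_simps)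
  show "1 * a = a" by transfer (rule blinfun_eqI, simp)
  show "a * 1 = a" by transfer (rule blinfun_eqI, simp)
  show "(0::'a linop) \<noteq> 1"
  proof transfer
    show "(0::(real^'a) \<Rightarrow>\<^sub>L (real^'a)) \<noteq> id_blinfun"
    proof
      assume h: "(0::(real^'a) \<Rightarrow>\<^sub>L (real^'a)) = id_blinfun"
      have "blinfun_apply (0::(real^'a) \<Rightarrow>\<^sub>L (real^'a)) (axis undefined 1) = axis undefined 1"
        by (subst h) simp
      then show False by (simp add: axis_eq_0_iff)
    qed
  qed
  show "r *\<^sub>R a * b = r *\<^sub>R (a * b)"
    by transfer (rule blinfun_eqI, simp add: blinfun.bilinear_simps)
  show "a * r *\<^sub>R b = r *\<^sub>R (a * b)"
    by transfer (rule blinfun_eqI, simp add: blinfun.bilinear_simps)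
  show "dist a b = norm (a - b)" by (simp add: dist_linop_def)
  show "(uniformity :: ('a linop \<times> 'a linop) filter) =
      (INF e\<in>{0 <..}. principal {(x, y). dist x y < e})"
    by (simp add: uniformity_linop_def)
  show "sgn a = inverse (norm a) *\<^sub>R a" by (simp add: sgn_linop_def)
  show "(norm a = 0) = (a = 0)" by transfer simp
  show "norm (a + b) \<le> norm a + norm b" by transfer (rule norm_triangle_ineq)
  show "norm (r *\<^sub>R a) = \<bar>r\<bar> * norm a" by transfer simp
  show "norm (a * b) \<le> norm a * norm b" by transfer (rule norm_blinfun_compose)
  show "norm (1::'a linop) = 1" by transfer simp
next
  fix U :: "'a linop set"
  show "open U = (\<forall>x\<in>U. \<forall>\<^sub>F (x', y) in uniformity. x' = x \<longrightarrow> y \<in> U)"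
    by (simp add: open_linop_def)
qed
end

lemma norm_Rep_linop: "norm (Rep_linop a) = norm a"
  by transfer simp

lemma Rep_linop_diff: "Rep_linop (a - b) = Rep_linop a - Rep_linop b"
  by transfer simp

instance linop :: (finite) banach
proof
  fix X :: "nat \<Rightarrow> 'a linop"
  assume "Cauchy X"
  then have "Cauchy (\<lambda>n. Rep_linop (X n))"
    by (simp add: Cauchy_def dist_norm dist_linop_def flip: Rep_linop_diff norm_Rep_linop)
  then obtain L where L: "(\<lambda>n. Rep_linop (X n)) \<longlonglongrightarrow> L"
    using convergent_eq_Cauchy by blast
  have "X \<longlonglongrightarrow> Abs_linop L"
    using L unfolding LIMSEQ_def
    by (simp add: dist_norm dist_linop_def Rep_linop_diff Abs_linop_inverse flip: norm_Rep_linop)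
  then show "convergent X" by (auto simp: convergent_def)
qed

definition linop_of_matrix :: "real^'n^'n \<Rightarrow> 'n::finite linop" where
  "linop_of_matrix M = Abs_linop (Blinfun ((*v) M))"

definition matrix_of_linop :: "'n::finite linop \<Rightarrow> real^'n^'n" where
  "matrix_of_linop X = matrix (blinfun_apply (Rep_linop X))"

lemma matrix_of_linop_apply: "matrix_of_linop X *v v = blinfun_apply (Rep_linop X) v"
  unfolding matrix_of_linop_def
  by (simp add: matrix_works blinfun.bounded_linear_right bounded_linear.linear)

lemma Rep_linop_of_matrix: "blinfun_apply (Rep_linop (linop_of_matrix M)) = (*v) M"
  unfolding linop_of_matrix_def
  by (simp add: Abs_linop_inverse bounded_linear_Blinfun_apply matrix_vector_mul_bounded_linear)

lemma matrix_of_linop_of_matrix [simp]: "matrix_of_linop (linop_of_matrix M) = M"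
  unfolding matrix_of_linop_def Rep_linop_of_matrix by (simp add: matrix_of_matrix_vector_mul)

lemma matrix_eqI: "(\<And>v. (A::real^'n^'m) *v v = B *v v) \<Longrightarrow> A = B"
  by (metis matrix_of_matrix_vector_mul ext)

lemma matrix_of_linop_mult: "matrix_of_linop (X * Y) = matrix_of_linop X ** matrix_of_linop Y"
  by (rule matrix_eqI)
    (simp add: matrix_of_linop_apply times_linop.rep_eq flip: matrix_vector_mul_assoc)

lemma matrix_of_linop_one: "matrix_of_linop 1 = mat 1"
  by (rule matrix_eqI) (simp add: matrix_of_linop_apply one_linop.rep_eq)

lemma linop_of_matrix_scaleR: "linop_of_matrix (c *\<^sub>R M) = c *\<^sub>R linop_of_matrix M"
  by (metis Rep_linop_of_matrix Rep_linop_inverse blinfun_eqI linop_of_matrix_def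
      scaleR_linop.rep_eq blinfun.scaleR_left scaleR_matrix_vector_assoc)

lemma bounded_linear_apply_linop: "bounded_linear (\<lambda>X. matrix_of_linop X *v v)"
proof (rule bounded_linear_intro[where K="norm v"])
  fix X Y :: "'a linop" and c :: real
  show "matrix_of_linop (X + Y) *v v = matrix_of_linop X *v v + matrix_of_linop Y *v v"
    by (simp add: matrix_of_linop_apply plus_linop.rep_eq blinfun.add_left)
  show "matrix_of_linop (c *\<^sub>R X) *v v = c *\<^sub>R (matrix_of_linop X *v v)"
    by (simp add: matrix_of_linop_apply scaleR_linop.rep_eq blinfun.scaleR_left)
  show "norm (matrix_of_linop X *v v) \<le> norm X * norm v"
    using norm_blinfun[of "Rep_linop X" v] by (simp add: matrix_of_linop_apply norm_Rep_linop)
qed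

lemma matrix_of_linop_add: "matrix_of_linop (X + Y) = matrix_of_linop X + matrix_of_linop Y"
  by (rule matrix_eqI)
    (simp add: matrix_of_linop_apply plus_linop.rep_eq matrix_vector_mult_add_rdistrib blinfun.add_left)

lemma matrix_of_linop_scaleR: "matrix_of_linop (c *\<^sub>R X) = c *\<^sub>R matrix_of_linop X"
  by (rule matrix_eqI) (simp add: matrix_of_linop_apply scaleR_linop.rep_eq blinfun.scaleR_left
     flip: scaleR_matrix_vector_assoc)

lemma bounded_linear_matrix_of_linop:
  "bounded_linear (matrix_of_linop :: 'n::finite linop \<Rightarrow> real^'n^'n)"
proof
  fix X Y :: "'n linop" and c :: real
  show "matrix_of_linop (X + Y) = matrix_of_linop X + matrix_of_linop Y"
    by (rule matrix_of_linop_add)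
  show "matrix_of_linop (c *\<^sub>R X) = c *\<^sub>R matrix_of_linop X"
    by (rule matrix_of_linop_scaleR)
  show "\<exists>K. \<forall>X::'n linop. norm (matrix_of_linop X) \<le> norm X * K"
  proof (intro exI allI)
    fix X :: "'n linop"
    have entry: "\<bar>matrix_of_linop X $ i $ j\<bar> \<le> norm X" for i j
    proof -
      have "matrix_of_linop X $ i $ j = (matrix_of_linop X *v axis j 1) $ i"
        by (simp add: matrix_vector_mult_def axis_def if_distrib cong: if_cong)
      then have "\<bar>matrix_of_linop X $ i $ j\<bar> \<le> norm (matrix_of_linop X *v axis j 1)"
        by (metis component_le_norm_cart)
      also have "\<dots> \<le> norm (Rep_linop X) * norm (axis j (1::real) :: real^'n)"
        unfolding matrix_of_linop_apply by (rule norm_blinfun)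
      finally show ?thesis by (simp add: norm_Rep_linop)
    qed
    have "norm (matrix_of_linop X) \<le> (\<Sum>i\<in>UNIV. norm (matrix_of_linop X $ i))"
      unfolding norm_vec_def by (rule L2_set_le_sum) simp
    also have "\<dots> \<le> (\<Sum>i\<in>(UNIV::'n set). \<Sum>j\<in>(UNIV::'n set). \<bar>matrix_of_linop X $ i $ j\<bar>)"
      by (intro sum_mono norm_le_l1_cart)
    also have "\<dots> \<le> (\<Sum>i\<in>(UNIV::'n set). \<Sum>j\<in>(UNIV::'n set). norm X)"
      by (intro sum_mono entry)
    finally show "norm (matrix_of_linop X) \<le> norm X * (real CARD('n) * real CARD('n))"
      by (simp add: mult_ac)
  qed
qed

lemma mpow_eq_matrix_of_linop: "mpow M k = matrix_of_linop (linop_of_matrix M ^ k)"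
  by (induction k) (simp_all add: matrix_of_linop_one matrix_of_linop_mult)

lemma mexp_eq_matrix_of_linop: "mexp M = matrix_of_linop (exp (linop_of_matrix M))"
  using bounded_linear.suminf[OF bounded_linear_matrix_of_linop
      summable_exp_generic[of "linop_of_matrix M"]]
  by (simp add: mexp_def exp_def mpow_eq_matrix_of_linop divide_inverse_commute
      matrix_of_linop_scaleR)

lemma summable_mexp: "summable (\<lambda>k. (1 / fact k) *\<^sub>R mpow M k)"
  using bounded_linear.summable[OF bounded_linear_matrix_of_linop
      summable_exp_generic[of "linop_of_matrix M"]]
  by (simp add: matrix_of_linop_scaleR mpow_eq_matrix_of_linop divide_inverse_commute)

lemma mexp_add_scaleR: "mexp (s *\<^sub>R M) ** mexp (t *\<^sub>R M) = mexp ((s + t) *\<^sub>R M)"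
  by (simp add: mexp_eq_matrix_of_linop linop_of_matrix_scaleR
      flip: matrix_of_linop_mult exp_add_commuting scaleR_add_left)

lemma mexp_zero: "mexp (0 :: real^'n^'n) = mat 1"
proof -
  have "linop_of_matrix (0::real^'n^'n) = 0"
    using linop_of_matrix_scaleR[of 0 0] by simp
  then show ?thesis by (simp add: mexp_eq_matrix_of_linop matrix_of_linop_one)
qed

lemma mexp_flow_has_vector_derivative:
  "((\<lambda>s. mexp ((s - r) *\<^sub>R M) *v v) has_vector_derivative M *v (mexp ((s - r) *\<^sub>R M) *v v))
    (at s within S)"
proof -
  let ?L = "linop_of_matrix M"
  have "((\<lambda>u. exp (u *\<^sub>R ?L)) has_vector_derivative ?L * exp ((s - r) *\<^sub>R ?L))
      (at (s - r) within (\<lambda>s. s - r) ` S)"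
    by (rule exp_scaleR_has_vector_derivative_left[THEN has_vector_derivative_at_within])
  moreover have "((\<lambda>s. s - r) has_vector_derivative 1) (at s within S)"
    by (auto intro!: derivative_eq_intros)
  ultimately have "((\<lambda>s. exp ((s - r) *\<^sub>R ?L)) has_vector_derivative ?L * exp ((s - r) *\<^sub>R ?L))
      (at s within S)"
    using vector_diff_chain_within by (fastforce simp: o_def)
  from bounded_linear.has_vector_derivative[OF bounded_linear_apply_linop this]
  show ?thesis
    by (simp add: mexp_eq_matrix_of_linop linop_of_matrix_scaleR matrix_of_linop_mult
        matrix_vector_mul_assoc)
qed

section \<open>Induced matrix norms\<close>

lemma norm2_bound: "norm (A *v v) \<le> norm2 A * norm v"
  unfolding norm2_def by (rule onorm[OF matrix_vector_mul_bounded_linear])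

lemma norm2_nonneg: "0 \<le> norm2 A"
  unfolding norm2_def by (rule onorm_pos_le[OF matrix_vector_mul_bounded_linear])

lemma norminf_ge: "(\<Sum>j\<in>UNIV. \<bar>M$i$j\<bar>) \<le> norminf M"
  unfolding norminf_def by (rule Max_ge) auto

lemma norminf_le_iff: "norminf M \<le> c \<longleftrightarrow> (\<forall>i. (\<Sum>j\<in>UNIV. \<bar>M$i$j\<bar>) \<le> c)"
  unfolding norminf_def by (subst Max_le_iff) auto

lemma norminf_nonneg: "0 \<le> norminf M"
  by (rule order_trans[OF _ norminf_ge]) (simp add: sum_nonneg)

lemma norminf_sum: "finite A \<Longrightarrow> norminf (\<Sum>k\<in>A. f k) \<le> (\<Sum>k\<in>A. norminf (f k))"
proof (subst norminf_le_iff, intro allI)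
  fix i assume "finite A"
  have "(\<Sum>j\<in>UNIV. \<bar>(\<Sum>k\<in>A. f k) $ i $ j\<bar>) \<le> (\<Sum>j\<in>UNIV. \<Sum>k\<in>A. \<bar>f k $ i $ j\<bar>)"
    by (simp add: sum_component sum_mono sum_abs)
  also have "\<dots> = (\<Sum>k\<in>A. \<Sum>j\<in>UNIV. \<bar>f k $ i $ j\<bar>)" by (rule sum.swap)
  also have "\<dots> \<le> (\<Sum>k\<in>A. norminf (f k))" by (intro sum_mono norminf_ge)
  finally show "(\<Sum>j\<in>UNIV. \<bar>(\<Sum>k\<in>A. f k) $ i $ j\<bar>) \<le> (\<Sum>k\<in>A. norminf (f k))" .
qed

lemma norminf_scaleR: "norminf (c *\<^sub>R M) = \<bar>c\<bar> * norminf M"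
proof -
  have "norminf (c *\<^sub>R M) = Max ((\<lambda>x. \<bar>c\<bar> * x) ` range (\<lambda>i. \<Sum>j\<in>UNIV. \<bar>M$i$j\<bar>))"
    by (simp add: norminf_def image_image abs_mult sum_distrib_left)
  also have "\<dots> = \<bar>c\<bar> * norminf M"
    unfolding norminf_def
    by (rule mono_Max_commute[symmetric]) (auto simp: mono_def mult_left_mono)
  finally show ?thesis .
qed

lemma norminf_mult: "norminf ((X::real^'n^'n) ** Y) \<le> norminf X * norminf Y"
proof (subst norminf_le_iff, intro allI)
  fix i
  have "(\<Sum>j\<in>UNIV. \<bar>(X ** Y) $ i $ j\<bar>) = (\<Sum>j\<in>UNIV. \<bar>\<Sum>l\<in>UNIV. X$i$l * Y$l$j\<bar>)"
    by (simp add: matrix_matrix_mult_def)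
  also have "\<dots> \<le> (\<Sum>j\<in>UNIV. \<Sum>l\<in>UNIV. \<bar>X$i$l\<bar> * \<bar>Y$l$j\<bar>)"
    by (intro sum_mono order_trans[OF sum_abs]) (simp add: abs_mult)
  also have "\<dots> = (\<Sum>l\<in>UNIV. \<bar>X$i$l\<bar> * (\<Sum>j\<in>UNIV. \<bar>Y$l$j\<bar>))"
    by (subst sum.swap) (simp add: sum_distrib_left)
  also have "\<dots> \<le> (\<Sum>l\<in>UNIV. \<bar>X$i$l\<bar>) * norminf Y"
    by (simp add: sum_distrib_right sum_mono mult_left_mono norminf_ge)
  also have "\<dots> \<le> norminf X * norminf Y" by (intro mult_right_mono norminf_ge norminf_nonneg)
  finally show "(\<Sum>j\<in>UNIV. \<bar>(X ** Y) $ i $ j\<bar>) \<le> norminf X * norminf Y" .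
qed

lemma norminf_mat_1: "norminf (mat 1 :: real^'n^'n) = 1"
proof -
  have row: "(\<Sum>j\<in>UNIV. \<bar>(mat 1 :: real^'n^'n)$i$j\<bar>) = 1" for i
    by (simp add: mat_def if_distrib cong: if_cong)
  show ?thesis
    using norminf_ge[of "mat 1 :: real^'n^'n"] norminf_le_iff[of "mat 1 :: real^'n^'n" 1]
    by (simp add: row antisym)
qed

lemma norminf_mpow: "norminf (mpow M k) \<le> norminf M ^ k"
proof (induction k)
  case 0
  then show ?case by (simp add: norminf_mat_1)
next
  case (Suc k)
  have "norminf (mpow M (Suc k)) \<le> norminf M * norminf (mpow M k)"
    by (simp add: norminf_mult)
  also have "\<dots> \<le> norminf M * norminf M ^ k"
    by (intro mult_left_mono Suc norminf_nonneg)
  finally show ?case by simp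
qed

lemma norminf_mexp_le: "norminf (mexp M) \<le> exp (norminf M)"
proof (subst norminf_le_iff, intro allI)
  fix i
  let ?f = "\<lambda>k. (1 / fact k) *\<^sub>R mpow M k"
  have "(\<lambda>N. \<Sum>k<N. ?f k) \<longlonglongrightarrow> mexp M"
    unfolding mexp_def using summable_mexp summable_LIMSEQ by blast
  then have lim: "(\<lambda>N. \<Sum>j\<in>UNIV. \<bar>(\<Sum>k<N. ?f k) $ i $ j\<bar>) \<longlonglongrightarrow> (\<Sum>j\<in>UNIV. \<bar>mexp M $ i $ j\<bar>)"
    by (intro tendsto_sum tendsto_rabs tendsto_vec_nth)
  have partial: "(\<Sum>j\<in>UNIV. \<bar>(\<Sum>k<N. ?f k) $ i $ j\<bar>) \<le> exp (norminf M)" for N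
  proof -
    have "(\<Sum>j\<in>UNIV. \<bar>(\<Sum>k<N. ?f k) $ i $ j\<bar>) \<le> (\<Sum>k<N. norminf (?f k))"
      using norminf_ge order_trans norminf_sum by blast
    also have "\<dots> \<le> (\<Sum>k<N. norminf M ^ k / fact k)"
      by (intro sum_mono) (simp add: norminf_scaleR divide_right_mono norminf_mpow)
    also have "\<dots> \<le> (\<Sum>k. norminf M ^ k / fact k)"
      using summable_exp_generic[of "norminf M"]
      by (intro sum_le_suminf) (auto simp: norminf_nonneg divide_inverse mult.commute)
    also have "\<dots> = exp (norminf M)"
      by (simp add: exp_def divide_inverse mult.commute)
    finally show ?thesis .
  qed
  show "(\<Sum>j\<in>UNIV. \<bar>mexp M $ i $ j\<bar>) \<le> exp (norminf M)"
    using LIMSEQ_le_const2[OF lim] partial by blast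
qed

lemma norminf_mexp_pos: "0 < norminf (mexp M)"
proof -
  have "1 = norminf (mexp ((-1) *\<^sub>R M) ** mexp (1 *\<^sub>R M))"
    by (simp only: mexp_add_scaleR) (simp add: mexp_zero norminf_mat_1)
  also have "\<dots> \<le> norminf (mexp ((-1) *\<^sub>R M)) * norminf (mexp M)"
    using norminf_mult by simp
  finally show ?thesis
    using norminf_nonneg[of "mexp M"] by (cases "norminf (mexp M) = 0") auto
qed


section \<open>Quadratic forms and extreme eigenvalues\<close>

lemma symmetric_mat_inner_commute:
  "symmetric_mat P \<Longrightarrow> (x::real^'n) \<bullet> (P *v y) = y \<bullet> (P *v x)"
  unfolding symmetric_mat_def
  by (metis dot_lmul_matrix inner_commute transpose_matrix_vector)

lemma psd_quadratic_form_zero_imp_kernel: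
  fixes S :: "real^'n^'n"
  assumes sym: "symmetric_mat S" and psd: "\<And>x. 0 \<le> x \<bullet> (S *v x)" and u: "u \<bullet> (S *v u) = 0"
  shows "S *v u = 0"
proof (rule ccontr)
  define v where "v = S *v u"
  assume "S *v u \<noteq> 0"
  then have vp: "0 < v \<bullet> v" using v_def by simp
  define q where "q = v \<bullet> (S *v v)"
  have q0: "0 \<le> q" using psd q_def by simp
  define t where "t = (v \<bullet> v) / (q + 1)"
  have t0: "0 < t" using vp q0 t_def by simp
  have "0 \<le> (u - t *\<^sub>R v) \<bullet> (S *v (u - t *\<^sub>R v))" by (rule psd)
  also have "\<dots> = u \<bullet> (S *v u) - t * (u \<bullet> (S *v v)) - t * (v \<bullet> (S *v u)) + t * t * q"
    by (simp add: matrix_vector_mult_diff_distrib matrix_vector_mult_scaleR inner_diff_left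
        inner_diff_right q_def algebra_simps)
  also have "\<dots> = t * (- 2 * (v \<bullet> v) + t * q)"
    using u symmetric_mat_inner_commute[OF sym, of u v] by (simp add: v_def algebra_simps)
  finally have "0 \<le> - 2 * (v \<bullet> v) + t * q"
    using t0 by (simp add: zero_le_mult_iff)
  moreover have "t * q \<le> v \<bullet> v"
    using q0 vp unfolding t_def by (simp add: field_simps)
  ultimately show False using vp by simp
qed

text \<open>The minimum of the quadratic form on the unit sphere is an eigenvalue (the form minus
  that multiple of the identity is positive semidefinite and vanishes at the minimizer), and it
  lies below every eigenvalue.\<close>

lemma symmetric_lam_min_attained:
  fixes P :: "real^'n^'n"
  assumes sym: "symmetric_mat P"
  shows "\<exists>u. norm u = 1 \<and> u \<bullet> (P *v u) = lam_min P \<and> (\<forall>x. lam_min P * (x \<bullet> x) \<le> x \<bullet> (P *v x))"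
proof -
  have cont: "continuous_on (sphere 0 1) (\<lambda>x::real^'n. x \<bullet> (P *v x))"
    by (intro continuous_intros linear_continuous_on matrix_vector_mul_bounded_linear)
  have "axis undefined 1 \<in> sphere (0::real^'n) 1" by simp
  then have ne: "sphere (0::real^'n) 1 \<noteq> {}" by blast
  obtain u where u: "u \<in> sphere 0 1"
    and umin: "\<And>y. y \<in> sphere 0 1 \<Longrightarrow> u \<bullet> (P *v u) \<le> y \<bullet> (P *v y)"
    using continuous_attains_inf[OF compact_sphere ne cont] by blast
  define m where "m = u \<bullet> (P *v u)"
  have lb: "m * (x \<bullet> x) \<le> x \<bullet> (P *v x)" for x
  proof (cases "x = 0")
    case False
    have "inverse (norm x) *\<^sub>R x \<in> sphere 0 1" using False by simp
    then have "m \<le> (inverse (norm x))\<^sup>2 * (x \<bullet> (P *v x))"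
      using umin[of "inverse (norm x) *\<^sub>R x"] unfolding m_def
      by (simp only: matrix_vector_mult_scaleR inner_scaleR_left inner_scaleR_right
          power2_eq_square mult.assoc)
    then have "m * (norm x)\<^sup>2 \<le> x \<bullet> (P *v x)"
      using False by (simp add: field_simps power2_eq_square)
    then show ?thesis by (simp add: power2_norm_eq_inner)
  qed simp
  define S where "S = P - m *\<^sub>R mat 1"
  have Sx: "S *v x = P *v x - m *\<^sub>R x" for x
    by (simp add: S_def matrix_vector_mult_diff_rdistrib flip: scaleR_matrix_vector_assoc)
  have symS: "symmetric_mat S"
    using sym unfolding symmetric_mat_def S_def by (simp add: transpose_def vec_eq_iff mat_def)
  have "S *v u = 0"
  proof (rule psd_quadratic_form_zero_imp_kernel[OF symS])
    show "0 \<le> x \<bullet> (S *v x)" for x using lb[of x] by (simp add: Sx inner_diff_right)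
    show "u \<bullet> (S *v u) = 0" using u by (simp add: Sx inner_diff_right m_def dot_square_norm)
  qed
  then have eig: "m \<in> real_eigenvalues P"
    unfolding real_eigenvalues_def using u by (auto simp: Sx intro!: exI[of _ u])
  have lower: "m \<le> l" if l: "l \<in> real_eigenvalues P" for l
  proof -
    obtain v where v: "v \<noteq> 0" "P *v v = l *\<^sub>R v"
      using l unfolding real_eigenvalues_def by blast
    have "m * (v \<bullet> v) \<le> l * (v \<bullet> v)" using lb[of v] v by simp
    then show "m \<le> l" using v by simp
  qed
  have "lam_min P = m"
    unfolding lam_min_def by (rule cInf_eq_minimum[OF eig lower])
  then show ?thesis using u lb by (auto simp: m_def)
qed

lemma matrix_vector_mult_uminus: "(- A) *v x = - (A *v (x::real^'n))"
  by (simp add: vec_eq_iff matrix_vector_mult_def sum_negf)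

lemma lam_max_eq_uminus_lam_min: "lam_max P = - lam_min (- P)"
proof -
  have "real_eigenvalues (- P) = uminus ` real_eigenvalues P"
  proof -
    have "(- P) *v v = l *\<^sub>R v \<longleftrightarrow> P *v v = (- l) *\<^sub>R v" for v l
      by (auto simp: matrix_vector_mult_uminus minus_equation_iff[of "P *v v"])
    then have "real_eigenvalues (- P) = {l. - l \<in> real_eigenvalues P}"
      by (simp add: real_eigenvalues_def)
    then show ?thesis
      by (force intro: image_eqI[where x = "- _"])
  qed
  then show ?thesis
    by (simp add: lam_min_def lam_max_def Inf_real_def image_image)
qed

lemma lam_min_le_quadratic_form: "symmetric_mat P \<Longrightarrow> lam_min P * (x \<bullet> x) \<le> x \<bullet> (P *v x)"
  using symmetric_lam_min_attained by blast

lemma quadratic_form_le_lam_max: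
  assumes "symmetric_mat P" shows "x \<bullet> (P *v x) \<le> lam_max P * (x \<bullet> x)"
proof -
  have "symmetric_mat (- P)"
    using assms by (simp add: symmetric_mat_def transpose_def vec_eq_iff)
  then show ?thesis
    using lam_min_le_quadratic_form[of "- P" x]
    by (simp add: lam_max_eq_uminus_lam_min matrix_vector_mult_uminus)
qed

lemma pos_def_quadratic_form_nonneg: "pos_def P \<Longrightarrow> 0 \<le> x \<bullet> (P *v x)"
  unfolding pos_def_def by (cases "x = 0") (auto intro: less_imp_le)

lemma pos_def_lam_min_pos: "pos_def P \<Longrightarrow> 0 < lam_min P"
  unfolding pos_def_def by (metis symmetric_lam_min_attained norm_zero zero_neq_one)

lemma pos_def_lam_max_pos:
  assumes "pos_def P" shows "0 < lam_max P"
proof -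
  have sym: "symmetric_mat P" using assms by (simp add: pos_def_def)
  then obtain u where "norm u = 1" "u \<bullet> (P *v u) = lam_min P"
    using symmetric_lam_min_attained by blast
  with quadratic_form_le_lam_max[OF sym, of u] pos_def_lam_min_pos[OF assms]
  show ?thesis by (simp add: dot_square_norm)
qed


section \<open>Comparison principles for right derivatives\<close>

lemma has_real_derivative_neg_imp_right_decreasing:
  fixes f :: "real \<Rightarrow> real"
  assumes "(f has_real_derivative d) (at s within {s..})" "d < 0"
  obtains e where "e > 0" "\<And>u. s < u \<Longrightarrow> u < s + e \<Longrightarrow> f u < f s"
proof -
  have "((\<lambda>y. (f y - f s) / (y - s)) \<longlongrightarrow> d) (at_right s)"
    using assms(1) by (simp add: has_field_derivative_iff at_within_Ici_at_right)
  then have "\<forall>\<^sub>F y in at_right s. (f y - f s) / (y - s) < 0"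
    using assms(2) by (rule order_tendstoD(2))
  then obtain b where b: "b > s" "\<And>y. y > s \<Longrightarrow> y < b \<Longrightarrow> (f y - f s) / (y - s) < 0"
    unfolding eventually_at_right_field by blast
  show ?thesis
  proof (rule that[of "b - s"])
    fix u assume "s < u" "u < s + (b - s)"
    then have "(f u - f s) / (u - s) < 0" "u - s > 0" using b by auto
    then show "f u < f s" by (simp add: divide_less_0_iff)
  qed (use b in simp)
qed

lemma continuous_on_Inf_positive_zero:
  fixes f :: "real \<Rightarrow> real" and a b s0 :: real
  defines "S \<equiv> {s\<in>{a..b}. 0 < f s}"
  assumes cont: "continuous_on {a..b} f" and fa: "f a \<le> 0" and s0: "s0 \<in> S"
  shows "f (Inf S) = 0" and "a \<le> Inf S" and "\<And>s. s \<in> S \<Longrightarrow> Inf S \<le> s"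
    and "\<And>e. 0 < e \<Longrightarrow> \<exists>s\<in>S. s < Inf S + e"
proof -
  have bdd: "bdd_below S" by (auto simp: S_def bdd_below_def)
  show \<sigma>_le: "Inf S \<le> s" if "s \<in> S" for s
    using that bdd by (rule cInf_lower)
  show a\<sigma>: "a \<le> Inf S"
    using s0 by (intro cInf_greatest) (auto simp: S_def)
  show near: "\<exists>s\<in>S. s < Inf S + e" if "0 < e" for e
    using cInf_lessD[of S "Inf S + e"] s0 that by auto
  have \<sigma>b: "Inf S \<le> b" using \<sigma>_le[OF s0] s0 by (simp add: S_def)
  have cont\<sigma>: "\<exists>\<delta>>0. \<forall>u\<in>{a..b}. \<bar>u - Inf S\<bar> < \<delta> \<longrightarrow> \<bar>f u - f (Inf S)\<bar> < e" if "e > 0" for e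
    using cont a\<sigma> \<sigma>b that unfolding continuous_on_iff by (auto simp: dist_real_def)
  have "f (Inf S) \<ge> 0"
  proof (rule ccontr)
    assume "\<not> f (Inf S) \<ge> 0"
    then obtain \<delta> where "\<delta> > 0"
      "\<And>u. u \<in> {a..b} \<Longrightarrow> \<bar>u - Inf S\<bar> < \<delta> \<Longrightarrow> \<bar>f u - f (Inf S)\<bar> < - f (Inf S)"
      using cont\<sigma>[of "- f (Inf S)"] by auto
    moreover obtain s where "s \<in> S" "s < Inf S + \<delta>" using near \<open>\<delta> > 0\<close> by blast
    ultimately show False using \<sigma>_le[of s] by (force simp: S_def)
  qed
  moreover have "f (Inf S) \<le> 0"
  proof (rule ccontr)
    assume pos: "\<not> f (Inf S) \<le> 0"
    then have "a < Inf S" using fa a\<sigma> by (cases "a = Inf S") auto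
    obtain \<delta> where \<delta>: "\<delta> > 0"
      "\<And>u. u \<in> {a..b} \<Longrightarrow> \<bar>u - Inf S\<bar> < \<delta> \<Longrightarrow> \<bar>f u - f (Inf S)\<bar> < f (Inf S)"
      using cont\<sigma>[of "f (Inf S)"] pos by auto
    define m where "m = max a (Inf S - \<delta> / 2)"
    have m: "m \<in> {a..b}" "\<bar>m - Inf S\<bar> < \<delta>" "m < Inf S"
      using \<open>a < Inf S\<close> \<sigma>b \<delta>(1) by (auto simp: m_def)
    then have "m \<in> S" using \<delta>(2)[of m] by (auto simp: S_def)
    then show False using \<sigma>_le m(3) by fastforce
  qed
  ultimately show "f (Inf S) = 0" by simp
qed

text \<open>At the infimum of the times where \<open>f\<close> is positive, \<open>f\<close> vanishes, and its negative right
  derivative there contradicts the choice of that infimum.\<close>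

lemma nonpos_by_right_derivative_at_zeros:
  fixes f :: "real \<Rightarrow> real"
  assumes cont: "continuous_on {a..b} f" and fa: "f a \<le> 0"
    and der: "\<And>s. a \<le> s \<Longrightarrow> s < b \<Longrightarrow> f s = 0 \<Longrightarrow>
        \<exists>d<0. (f has_real_derivative d) (at s within {s..})"
  shows "\<forall>s\<in>{a..b}. f s \<le> 0"
proof (rule ccontr)
  define S where "S = {s\<in>{a..b}. 0 < f s}"
  assume "\<not> (\<forall>s\<in>{a..b}. f s \<le> 0)"
  then obtain s0 where s0: "s0 \<in> S" by (auto simp: S_def not_le)
  note \<sigma> = continuous_on_Inf_positive_zero[OF cont fa s0[unfolded S_def], folded S_def]
  have "Inf S \<le> s0" "s0 \<le> b" "0 < f s0" using \<sigma>(3) s0 by (auto simp: S_def)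
  then have "Inf S < b" using \<sigma>(1) by (cases "Inf S = b") auto
  then obtain d where "(f has_real_derivative d) (at (Inf S) within {Inf S..})" "d < 0"
    using der \<sigma>(1,2) by blast
  then obtain e where "e > 0" "\<And>u. Inf S < u \<Longrightarrow> u < Inf S + e \<Longrightarrow> f u < f (Inf S)"
    using has_real_derivative_neg_imp_right_decreasing by blast
  moreover obtain s where "s \<in> S" "s < Inf S + e" using \<sigma>(4) \<open>e > 0\<close> by blast
  ultimately show False
    using \<sigma>(1) \<sigma>(3)[of s] by (cases "s = Inf S") (force simp: S_def)+
qed

lemma inner_has_real_derivative:
  assumes "(f has_vector_derivative f') (at s within S)" "(g has_vector_derivative g') (at s within S)"
  shows "((\<lambda>s. f s \<bullet> g s) has_real_derivative (f s \<bullet> g' + f' \<bullet> g s)) (at s within S)"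
  using has_derivative_inner[OF assms[unfolded has_vector_derivative_def]]
  unfolding has_field_derivative_def
  by (rule has_derivative_eq_rhs) (auto simp: fun_eq_iff algebra_simps)

text \<open>Perturbing the comparison function by \<open>\<eta> e^{L(s-a)}\<close> makes the difference strictly
  decrease at every touching point; then \<open>\<eta> \<rightarrow> 0\<close>.\<close>

lemma le_by_right_derivative_comparison:
  fixes \<phi> g \<phi>' g' :: "real \<Rightarrow> real"
  assumes cont: "continuous_on {a..b} \<phi>" "continuous_on {a..b} g" and start: "\<phi> a \<le> g a"
    and d\<phi>: "\<And>s. a \<le> s \<Longrightarrow> s < b \<Longrightarrow>
      \<exists>d. (\<phi> has_real_derivative d) (at s within {s..}) \<and> d \<le> \<phi>' s"
    and dg: "\<And>s. a \<le> s \<Longrightarrow> s < b \<Longrightarrow> (g has_real_derivative g' s) (at s within {s..})"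
    and touch: "\<And>\<eta> s. 0 < \<eta> \<Longrightarrow> a \<le> s \<Longrightarrow> s < b \<Longrightarrow> \<phi> s = g s + \<eta> * exp (L * (s - a)) \<Longrightarrow>
      \<phi>' s - g' s < \<eta> * exp (L * (s - a)) * L"
    and s: "s \<in> {a..b}"
  shows "\<phi> s \<le> g s"
proof (rule field_le_epsilon)
  fix \<epsilon> :: real assume "0 < \<epsilon>"
  define \<eta> where "\<eta> = \<epsilon> / exp (L * (s - a))"
  have \<eta>: "0 < \<eta>" using \<open>0 < \<epsilon>\<close> by (simp add: \<eta>_def)
  define f where "f u = \<phi> u - g u - \<eta> * exp (L * (u - a))" for u
  have "\<forall>u\<in>{a..b}. f u \<le> 0"
  proof (rule nonpos_by_right_derivative_at_zeros)
    show "continuous_on {a..b} f" unfolding f_def by (intro continuous_intros cont)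
    show "f a \<le> 0" using start \<eta> by (simp add: f_def)
    fix u assume u: "a \<le> u" "u < b" "f u = 0"
    obtain d where d: "(\<phi> has_real_derivative d) (at u within {u..})" "d \<le> \<phi>' u"
      using d\<phi>[OF u(1,2)] by blast
    have "((\<lambda>u. \<eta> * exp (L * (u - a))) has_real_derivative \<eta> * exp (L * (u - a)) * L)
        (at u within {u..})"
      by (auto intro!: derivative_eq_intros)
    from DERIV_diff[OF DERIV_diff[OF d(1) dg[OF u(1,2)]] this]
    have "(f has_real_derivative d - g' u - \<eta> * exp (L * (u - a)) * L) (at u within {u..})"
      unfolding f_def by simp
    moreover have "d - g' u - \<eta> * exp (L * (u - a)) * L < 0"
      using touch[OF \<eta> u(1,2)] u(3) d(2) by (simp add: f_def)
    ultimately show "\<exists>d<0. (f has_real_derivative d) (at u within {u..})" by blast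
  qed
  then have "f s \<le> 0" using s by blast
  then show "\<phi> s \<le> g s + \<epsilon>" by (simp add: f_def \<eta>_def)
qed

lemma linear_ode_norm_le_exp:
  fixes e :: "real \<Rightarrow> real^'n" and A :: "real^'n^'n"
  assumes cont: "continuous_on {a..b} e"
    and der: "\<And>s. a \<le> s \<Longrightarrow> s < b \<Longrightarrow> (e has_vector_derivative (A *v e s)) (at s within {s..})"
    and s: "s \<in> {a..b}"
  shows "norm (e s) \<le> exp (norm2 A * (s - a)) * norm (e a)"
proof -
  define c0 where "c0 = e a \<bullet> e a"
  have "e s \<bullet> e s \<le> c0 * exp (2 * norm2 A * (s - a))"
  proof (rule le_by_right_derivative_comparison[where L = "2 * norm2 A + 1" and s = s
        and \<phi> = "\<lambda>u. e u \<bullet> e u" and g = "\<lambda>u. c0 * exp (2 * norm2 A * (u - a))"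
        and \<phi>' = "\<lambda>u. 2 * norm2 A * (e u \<bullet> e u)"
        and g' = "\<lambda>u. c0 * exp (2 * norm2 A * (u - a)) * (2 * norm2 A)"])
    show "continuous_on {a..b} (\<lambda>u. e u \<bullet> e u)" by (intro continuous_intros cont)
    fix u assume u: "a \<le> u" "u < b"
    have "e u \<bullet> (A *v e u) \<le> norm (e u) * (norm2 A * norm (e u))"
      using norm_cauchy_schwarz[of "e u" "A *v e u"]
        mult_left_mono[OF norm2_bound[of A "e u"] norm_ge_zero[of "e u"]] by linarith
    then have "e u \<bullet> (A *v e u) + (A *v e u) \<bullet> e u \<le> 2 * norm2 A * (e u \<bullet> e u)"
      by (simp add: inner_commute[of "A *v e u"] dot_square_norm power2_eq_square mult_ac)
    then show "\<exists>d. ((\<lambda>u. e u \<bullet> e u) has_real_derivative d) (at u within {u..})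
        \<and> d \<le> 2 * norm2 A * (e u \<bullet> e u)"
      using inner_has_real_derivative[OF der[OF u] der[OF u]] by blast
    fix \<eta> assume "0 < \<eta>"
      "e u \<bullet> e u = c0 * exp (2 * norm2 A * (u - a)) + \<eta> * exp ((2 * norm2 A + 1) * (u - a))"
    then show "2 * norm2 A * (e u \<bullet> e u) - c0 * exp (2 * norm2 A * (u - a)) * (2 * norm2 A)
        < \<eta> * exp ((2 * norm2 A + 1) * (u - a)) * (2 * norm2 A + 1)"
      by (simp add: algebra_simps)
  qed (use s in \<open>auto simp: c0_def intro!: derivative_eq_intros continuous_intros\<close>)
  also have "\<dots> = (exp (norm2 A * (s - a)) * norm (e a))\<^sup>2"
  proof -
    have "exp (2 * norm2 A * (s - a)) = (exp (norm2 A * (s - a)))\<^sup>2"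
      by (simp add: power2_eq_square flip: exp_add)
    then show ?thesis by (simp add: c0_def dot_square_norm power_mult_distrib)
  qed
  finally have "(norm (e s))\<^sup>2 \<le> (exp (norm2 A * (s - a)) * norm (e a))\<^sup>2"
    by (simp add: dot_square_norm)
  then show ?thesis by (rule power2_le_imp_le) simp
qed

text \<open>Near the level \<open>1\<close> the square-root forcing is dominated by a linear one,
  \<open>\<surd>h \<le> (1 + h) / 2\<close>.\<close>

lemma sqrt_forcing_touch_lt:
  fixes w h g X L \<delta> :: real
  assumes w: "0 < w" and h: "0 \<le> h" and X: "0 \<le> X" "X \<le> L - 1" and g: "g \<le> 1"
    and \<delta>: "0 < \<delta>" and hg: "h = g + \<delta>"
  shows "- w * h + X * sqrt h - (- w * g + X) < \<delta> * L"
proof -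
  have "0 \<le> (sqrt h - 1)\<^sup>2" by simp
  then have "sqrt h \<le> (1 + h) / 2"
    using h by (simp add: power2_eq_square algebra_simps)
  from mult_left_mono[OF this X(1)]
  have "- w * h + X * sqrt h - (- w * g + X) \<le> - w * h + X * ((1 + h) / 2) - (- w * g + X)"
    by simp
  also have "\<dots> = - w * \<delta> + X * (g - 1) / 2 + X * \<delta> / 2"
    unfolding hg by (simp add: field_simps)
  also have "\<dots> \<le> X * \<delta> / 2"
    using mult_pos_pos[OF w \<delta>] mult_nonneg_nonpos[OF X(1), of "g - 1"] g by simp
  also have "\<dots> < \<delta> * L"
    using mult_strict_right_mono[of X "2 * L" \<delta>] X \<delta> by (simp add: mult_ac)
  finally show ?thesis .
qed

text \<open>The majorant solves \<open>g' = -w g + b e^{\<mu>(s-a)}\<close>.\<close>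

lemma sqrt_forced_decay_le_majorant:
  fixes h :: "real \<Rightarrow> real"
  assumes cont: "continuous_on {a..b} h" and h0: "\<And>s. s \<in> {a..b} \<Longrightarrow> 0 \<le> h s"
    and w: "w > 0" and mu: "\<mu> \<ge> 0" and b0: "b0 \<ge> 0"
    and der: "\<And>s. a \<le> s \<Longrightarrow> s < b \<Longrightarrow> \<exists>d. (h has_real_derivative d) (at s within {s..})
        \<and> d \<le> - w * h s + b0 * exp (\<mu> * (s - a)) * sqrt (h s)"
    and majorant: "\<And>s. s \<in> {a..b} \<Longrightarrow>
        h a * exp (- w * (s - a)) + b0 / (w + \<mu>) * (exp (\<mu> * (s - a)) - exp (- w * (s - a))) \<le> 1"
    and s: "s \<in> {a..b}"
  shows "h s \<le> 1"
proof -
  define g where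
    "g u = h a * exp (- w * (u - a)) + b0 / (w + \<mu>) * (exp (\<mu> * (u - a)) - exp (- w * (u - a)))"
    for u
  define X where "X u = b0 * exp (\<mu> * (u - a))" for u
  define L where "L = b0 * exp (\<mu> * (b - a)) + 1"
  have "h s \<le> g s"
  proof (rule le_by_right_derivative_comparison[where L = L and s = s and \<phi> = h and g = g
        and \<phi>' = "\<lambda>u. - w * h u + X u * sqrt (h u)" and g' = "\<lambda>u. - w * g u + X u"])
    show "continuous_on {a..b} g" unfolding g_def by (intro continuous_intros)
    fix u assume u: "a \<le> u" "u < b"
    have "(g has_real_derivative h a * (exp (- w * (u - a)) * (- w))
        + b0 / (w + \<mu>) * (exp (\<mu> * (u - a)) * \<mu> - exp (- w * (u - a)) * (- w))) (at u within {u..})"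
      unfolding g_def by (intro derivative_eq_intros refl) auto
    then show "(g has_real_derivative - w * g u + X u) (at u within {u..})"
      using w mu by (simp add: g_def X_def field_simps)
    fix \<eta> assume "0 < \<eta>" and hu: "h u = g u + \<eta> * exp (L * (u - a))"
    have "0 \<le> X u" "X u \<le> L - 1"
      unfolding X_def L_def using b0 mu u by (auto intro!: mult_left_mono)
    moreover have "g u \<le> 1" using majorant[of u] u by (simp add: g_def)
    ultimately show "- w * h u + X u * sqrt (h u) - (- w * g u + X u) < \<eta> * exp (L * (u - a)) * L"
      using sqrt_forcing_touch_lt[OF w h0[of u] _ _ _ _ hu] \<open>0 < \<eta>\<close> u by simp
  qed (use cont der s in \<open>auto simp: g_def X_def\<close>)
  also have "\<dots> \<le> 1" using majorant[OF s] by (simp add: g_def)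
  finally show ?thesis .
qed

text \<open>With \<open>y = e^{pD}\<close> and \<open>B = e^{pT}\<close>, this says that the convex map \<open>y \<mapsto> y^{q/p}\<close> lies below
  its chord over \<open>[1, B]\<close>.\<close>

lemma exp_ratio_mono:
  fixes p q D T :: real
  assumes p: "0 < p" and pq: "p \<le> q" and D: "0 \<le> D" "D \<le> T" and T: "0 < T"
  shows "(exp (p * T) - 1) * (exp (q * D) - 1) \<le> (exp (p * D) - 1) * (exp (q * T) - 1)"
proof -
  define r y B where "r = q / p" and "y = exp (p * D)" and "B = exp (p * T)"
  have r1: "r \<ge> 1" using p pq by (simp add: r_def)
  have B1: "1 < B" using p T by (simp add: B_def)
  define t where "t = (y - 1) / (B - 1)"
  have t: "0 \<le> t" "t \<le> 1" using p D B1 by (auto simp: t_def y_def B_def)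
  have "t * (B - 1) = y - 1" using B1 by (simp add: t_def)
  then have "(1 - t) *\<^sub>R 1 + t *\<^sub>R B = y" by (simp add: algebra_simps)
  moreover have "y powr r = exp (q * D)" "B powr r = exp (q * T)"
    using p by (simp_all add: y_def B_def powr_def r_def)
  ultimately have "exp (q * D) - 1 \<le> t * (exp (q * T) - 1)"
    using convex_onD[OF powr_convex[OF r1] t, of 1 B] B1 by (simp add: algebra_simps)
  then have "(B - 1) * (exp (q * D) - 1) \<le> (B - 1) * (t * (exp (q * T) - 1))"
    using B1 by (intro mult_left_mono) auto
  also have "\<dots> = (y - 1) * (exp (q * T) - 1)" using B1 by (simp add: t_def)
  finally show ?thesis by (simp add: y_def B_def)
qed

lemma sqrt_forced_majorant_le_one:
  fixes w \<mu> T D h0 b0 :: real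
  assumes w: "0 < w" and mu: "0 \<le> \<mu>" and D: "0 \<le> D" "D \<le> T" and h0: "h0 \<le> 1"
    and gain: "b0 \<le> (exp (w * T) - 1) * (w + \<mu>) / (exp ((w + \<mu>) * T) - 1)"
  shows "h0 * exp (- w * D) + b0 / (w + \<mu>) * (exp (\<mu> * D) - exp (- w * D)) \<le> 1"
proof -
  define q where "q = w + \<mu>"
  have q: "0 < q" "w \<le> q" using w mu by (auto simp: q_def)
  have growth: "b0 * (exp (q * D) - 1) / q \<le> exp (w * D) - 1"
  proof (cases "T = 0")
    case True
    then show ?thesis using D by simp
  next
    case False
    then have T: "0 < T" using D by simp
    have den: "0 < exp (q * T) - 1" using q T by simp
    have "b0 * (exp (q * D) - 1) / q
        \<le> (exp (w * T) - 1) * q / (exp (q * T) - 1) * (exp (q * D) - 1) / q"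
      using gain q D unfolding q_def[symmetric]
      by (intro divide_right_mono mult_right_mono) auto
    also have "\<dots> = (exp (w * T) - 1) * (exp (q * D) - 1) / (exp (q * T) - 1)"
      using q by simp
    also have "\<dots> \<le> exp (w * D) - 1"
      using exp_ratio_mono[OF w q(2) D T] den by (simp add: divide_le_eq mult.commute)
    finally show ?thesis .
  qed
  have "h0 * exp (- w * D) + b0 / q * (exp (\<mu> * D) - exp (- w * D))
      = exp (- w * D) * (h0 + b0 * (exp (q * D) - 1) / q)"
    using q by (simp add: q_def field_simps flip: exp_add)
  also have "\<dots> \<le> exp (- w * D) * (1 + (exp (w * D) - 1))"
    using h0 growth by (intro mult_left_mono add_mono) auto
  also have "\<dots> = 1" by (simp flip: exp_add)
  finally show ?thesis by (simp add: q_def)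
qed

lemma sqrt_forced_decay_le_one:
  fixes h :: "real \<Rightarrow> real"
  assumes cont: "continuous_on {a..b} h" and h_nonneg: "\<And>s. s \<in> {a..b} \<Longrightarrow> 0 \<le> h s"
    and w: "w > 0" and mu: "\<mu> \<ge> 0" and b0: "b0 \<ge> 0"
    and der: "\<And>s. a \<le> s \<Longrightarrow> s < b \<Longrightarrow> \<exists>d. (h has_real_derivative d) (at s within {s..})
        \<and> d \<le> - w * h s + b0 * exp (\<mu> * (s - a)) * sqrt (h s)"
    and ha: "h a \<le> 1"
    and gain: "b0 \<le> (exp (w * (b - a)) - 1) * (w + \<mu>) / (exp ((w + \<mu>) * (b - a)) - 1)"
  shows "\<forall>s\<in>{a..b}. h s \<le> 1"
  using sqrt_forced_decay_le_majorant[OF cont h_nonneg w mu b0 der]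
    sqrt_forced_majorant_le_one[OF w mu _ _ ha gain] by auto


section \<open>Lyapunov estimates\<close>

lemma lyapunov_quadratic_form:
  fixes P Q Abar :: "real^'n^'n"
  assumes sym: "symmetric_mat P" and lyap: "P ** Abar + transpose Abar ** P = - Q"
  shows "z \<bullet> (P *v (Abar *v z)) = - (z \<bullet> (Q *v z)) / 2"
proof -
  have "z \<bullet> (transpose Abar *v (P *v z)) = (P *v z) \<bullet> (Abar *v z)"
    by (simp add: inner_commute[of z] dot_lmul_matrix)
  also have "\<dots> = z \<bullet> (P *v (Abar *v z))"
    using symmetric_mat_inner_commute[OF sym, of "Abar *v z" z] by (simp add: inner_commute)
  finally have "z \<bullet> (transpose Abar *v (P *v z)) = z \<bullet> (P *v (Abar *v z))" .
  then have "z \<bullet> ((P ** Abar + transpose Abar ** P) *v z) = 2 * (z \<bullet> (P *v (Abar *v z)))"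
    by (simp add: matrix_vector_mult_add_rdistrib inner_add_right flip: matrix_vector_mul_assoc)
  then show ?thesis
    using lyap by (simp add: matrix_vector_mult_uminus)
qed

lemma lyapunov_perturbed_bound:
  fixes P Q Abar M :: "real^'n^'n"
  assumes P: "pos_def P" and Q: "pos_def Q" and lyap: "P ** Abar + transpose Abar ** P = - Q"
  shows "2 * (z \<bullet> (P *v (Abar *v z - M *v e)))
    \<le> - (lam_min Q / lam_max P) * (z \<bullet> (P *v z))
      + 2 * sqrt (z \<bullet> (P *v z) / lam_min P) * norm2 (P ** M) * norm e"
proof -
  have symP: "symmetric_mat P" and symQ: "symmetric_mat Q"
    using P Q by (simp_all add: pos_def_def)
  have "lam_min Q / lam_max P * (z \<bullet> (P *v z)) \<le> lam_min Q / lam_max P * (lam_max P * (z \<bullet> z))"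
    using quadratic_form_le_lam_max[OF symP, of z] pos_def_lam_min_pos[OF Q]
      pos_def_lam_max_pos[OF P] by (intro mult_left_mono) auto
  also have "\<dots> = lam_min Q * (z \<bullet> z)"
    using pos_def_lam_max_pos[OF P] by simp
  also have "\<dots> \<le> z \<bullet> (Q *v z)" by (rule lam_min_le_quadratic_form[OF symQ])
  finally have decay: "2 * (z \<bullet> (P *v (Abar *v z))) \<le> - (lam_min Q / lam_max P) * (z \<bullet> (P *v z))"
    by (simp add: lyapunov_quadratic_form[OF symP lyap])
  have "norm z \<le> sqrt (z \<bullet> (P *v z) / lam_min P)"
    using lam_min_le_quadratic_form[OF symP, of z] pos_def_lam_min_pos[OF P]
    by (intro real_le_rsqrt) (simp add: dot_square_norm field_simps)
  then have "norm z * norm ((P ** M) *v e) \<le> sqrt (z \<bullet> (P *v z) / lam_min P) * (norm2 (P ** M) * norm e)"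
    using pos_def_quadratic_form_nonneg[OF P, of z] pos_def_lam_min_pos[OF P]
    by (intro mult_mono norm2_bound) auto
  then have "- (z \<bullet> ((P ** M) *v e)) \<le> sqrt (z \<bullet> (P *v z) / lam_min P) * (norm2 (P ** M) * norm e)"
    using Cauchy_Schwarz_ineq2[of z "(P ** M) *v e"] by linarith
  with decay show ?thesis
    by (simp add: matrix_vector_mult_diff_distrib inner_diff_right matrix_vector_mul_assoc)
qed


lemma sqrt_exp: "sqrt (exp x) = exp (x / 2)"
proof -
  have "exp x = (exp (x / 2))\<^sup>2" by (simp add: power2_eq_square flip: exp_add)
  then show ?thesis by simp
qed

lemma sqrt_forcing_rescale:
  fixes V V0 lP N r E0 \<alpha> \<beta> D :: real
  assumes V0: "0 < V0" and lP: "0 < lP" and N: "0 \<le> N" and V: "0 \<le> V"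
    and r: "r \<le> E0 * exp (\<alpha> * D)"
  shows "2 * sqrt (V / lP) * N * r / (V0 * exp (- \<beta> * D))
    \<le> 2 * N * E0 / (sqrt lP * sqrt V0) * exp ((\<alpha> + \<beta> / 2) * D) * sqrt (V / (V0 * exp (- \<beta> * D)))"
proof -
  define Vd E where "Vd = V0 * exp (- \<beta> * D)" and "E = exp (\<beta> * D / 2)"
  have Vd: "0 < Vd" and E: "0 < E" using V0 by (simp_all add: Vd_def E_def)
  have "sqrt Vd * E = sqrt V0"
    by (simp add: Vd_def E_def real_sqrt_mult sqrt_exp mult.assoc flip: exp_add)
  then have sqrt_Vd: "sqrt Vd = sqrt V0 / E" using E by (simp add: field_simps)
  have "sqrt (H * (SV * SV) / lP) / (SV * SV) = sqrt H / (sqrt lP * SV)" if "0 < SV" for H SV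
    using that lP by (simp add: real_sqrt_mult real_sqrt_divide field_simps)
  from this[of "sqrt Vd" "V / Vd"] have "sqrt (V / lP) / Vd = sqrt (V / Vd) / (sqrt lP * sqrt Vd)"
    using Vd by simp
  then have key: "sqrt (V / lP) / Vd = E / (sqrt lP * sqrt V0) * sqrt (V / Vd)"
    using E V0 by (simp add: sqrt_Vd field_simps)
  have "2 * sqrt (V / lP) * N * r / Vd = 2 * N * r * (sqrt (V / lP) / Vd)"
    by simp
  also have "\<dots> = 2 * N * r * E / (sqrt lP * sqrt V0) * sqrt (V / Vd)"
    unfolding key by simp
  also have "\<dots> \<le> 2 * N * (E0 * exp (\<alpha> * D)) * E / (sqrt lP * sqrt V0) * sqrt (V / Vd)"
    using r E lP V0 N V Vd
    by (intro mult_right_mono divide_right_mono mult_left_mono) auto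
  also have "\<dots> = 2 * N * E0 / (sqrt lP * sqrt V0) * exp ((\<alpha> + \<beta> / 2) * D) * sqrt (V / Vd)"
    by (simp add: E_def algebra_simps flip: exp_add)
  finally show ?thesis by (simp add: Vd_def)
qed

lemma lyapunov_ratio_derivative_bound:
  fixes P Q Abar M :: "real^'n^'n" and x e :: "real \<Rightarrow> real^'n" and V0 E0 \<alpha> \<beta> l s :: real
  assumes P: "pos_def P" and Q: "pos_def Q" and lyap: "P ** Abar + transpose Abar ** P = - Q"
    and V0: "0 < V0" and E0: "0 \<le> E0"
    and dx: "(x has_vector_derivative Abar *v x s - M *v e s) (at s within {s..})"
    and e: "norm (e s) \<le> E0 * exp (\<alpha> * (s - l))"
  defines "h \<equiv> \<lambda>s. x s \<bullet> (P *v x s) / (V0 * exp (- \<beta> * (s - l)))"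
  shows "\<exists>d. (h has_real_derivative d) (at s within {s..}) \<and>
    d \<le> - (lam_min Q / lam_max P - \<beta>) * h s
      + 2 * norm2 (P ** M) * E0 / (sqrt (lam_min P) * sqrt V0)
        * exp ((\<alpha> + \<beta> / 2) * (s - l)) * sqrt (h s)"
proof -
  have symP: "symmetric_mat P" using P by (simp add: pos_def_def)
  define V N lP where "V = x s \<bullet> (P *v x s)" and "N = norm2 (P ** M)" and "lP = lam_min P"
  define Vd where "Vd = V0 * exp (- \<beta> * (s - l))"
  have Vd: "0 < Vd" using V0 by (simp add: Vd_def)
  have lP: "0 < lP" using pos_def_lam_min_pos[OF P] by (simp add: lP_def)
  have hs: "h s = V / Vd" by (simp add: h_def V_def Vd_def)
  define dV where "dV = 2 * (x s \<bullet> (P *v (Abar *v x s - M *v e s)))"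
  have "((\<lambda>s. x s \<bullet> (P *v x s)) has_real_derivative dV) (at s within {s..})"
    using inner_has_real_derivative[OF dx bounded_linear.has_vector_derivative
        [OF matrix_vector_mul_bounded_linear[of P] dx]]
    by (simp add: dV_def symmetric_mat_inner_commute[OF symP, of _ "x s"])
  moreover have "((\<lambda>s. V0 * exp (- \<beta> * (s - l))) has_real_derivative - \<beta> * Vd) (at s within {s..})"
    unfolding Vd_def by (auto intro!: derivative_eq_intros)
  ultimately have "(h has_real_derivative (dV * Vd - V * (- \<beta> * Vd)) / (Vd * Vd)) (at s within {s..})"
    using DERIV_divide Vd unfolding h_def V_def Vd_def by fastforce
  moreover have "(dV * Vd - V * (- \<beta> * Vd)) / (Vd * Vd) = dV / Vd + \<beta> * h s"
    using Vd by (simp add: hs field_simps)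
  ultimately have "(h has_real_derivative dV / Vd + \<beta> * h s) (at s within {s..})" by simp
  moreover have "dV / Vd \<le> - (lam_min Q / lam_max P) * h s + 2 * sqrt (V / lP) * N * norm (e s) / Vd"
  proof -
    have "dV / Vd \<le> (- (lam_min Q / lam_max P) * V + 2 * sqrt (V / lP) * N * norm (e s)) / Vd"
      using lyapunov_perturbed_bound[OF P Q lyap, of "x s" M "e s"] Vd
      unfolding dV_def V_def N_def lP_def by (intro divide_right_mono) auto
    then show ?thesis by (simp add: hs add_divide_distrib diff_divide_distrib)
  qed
  moreover have "2 * sqrt (V / lP) * N * norm (e s) / Vd
      \<le> 2 * N * E0 / (sqrt lP * sqrt V0) * exp ((\<alpha> + \<beta> / 2) * (s - l)) * sqrt (h s)"
    using sqrt_forcing_rescale[OF V0 lP _ _ e] pos_def_quadratic_form_nonneg[OF P, of "x s"]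
    by (simp add: hs N_def V_def Vd_def norm2_nonneg)
  ultimately show ?thesis
    unfolding N_def lP_def by (intro exI[of _ "dV / Vd + \<beta> * h s"]) (auto simp: algebra_simps)
qed


lemma lyapunov_ratio_le_one:
  fixes P Q Abar M :: "real^'n^'n" and x e :: "real \<Rightarrow> real^'n" and V0 E0 \<alpha> \<beta> l u :: real
  defines "w \<equiv> lam_min Q / lam_max P - \<beta>"
  assumes P: "pos_def P" and Q: "pos_def Q" and lyap: "P ** Abar + transpose Abar ** P = - Q"
    and V0: "0 < V0" and E0: "0 \<le> E0" and \<alpha>: "0 \<le> \<alpha>" and \<beta>: "0 \<le> \<beta>" and w: "0 < w"
    and cont: "continuous_on {l..u} x"
    and dx: "\<And>s. l \<le> s \<Longrightarrow> s < u \<Longrightarrow>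
      (x has_vector_derivative Abar *v x s - M *v e s) (at s within {s..})"
    and e: "\<And>s. l \<le> s \<Longrightarrow> s < u \<Longrightarrow> norm (e s) \<le> E0 * exp (\<alpha> * (s - l))"
    and start: "x l \<bullet> (P *v x l) / V0 \<le> 1"
    and gain: "2 * norm2 (P ** M) * E0 / (sqrt (lam_min P) * sqrt V0)
      \<le> (exp (w * (u - l)) - 1) * (w + (\<alpha> + \<beta> / 2)) / (exp ((w + (\<alpha> + \<beta> / 2)) * (u - l)) - 1)"
  shows "\<forall>s\<in>{l..u}. x s \<bullet> (P *v x s) / (V0 * exp (- \<beta> * (s - l))) \<le> 1"
proof (rule sqrt_forced_decay_le_one[OF _ _ w _ _ _ _ gain])
  show "continuous_on {l..u} (\<lambda>s. x s \<bullet> (P *v x s) / (V0 * exp (- \<beta> * (s - l))))"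
    using V0 by (intro continuous_intros cont linear_continuous_on_compose[OF cont]
        matrix_vector_mul_linear) auto
  show "0 \<le> x s \<bullet> (P *v x s) / (V0 * exp (- \<beta> * (s - l)))" for s
    using pos_def_quadratic_form_nonneg[OF P] V0 by simp
  show "0 \<le> 2 * norm2 (P ** M) * E0 / (sqrt (lam_min P) * sqrt V0)"
    using E0 V0 pos_def_lam_min_pos[OF P] norm2_nonneg[of "P ** M"] by simp
  show "x l \<bullet> (P *v x l) / (V0 * exp (- \<beta> * (l - l))) \<le> 1" using start by simp
  show "0 \<le> \<alpha> + \<beta> / 2" using \<alpha> \<beta> by simp
  fix s assume s: "l \<le> s" "s < u"
  show "\<exists>d. ((\<lambda>s. x s \<bullet> (P *v x s) / (V0 * exp (- \<beta> * (s - l)))) has_real_derivative d)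
      (at s within {s..}) \<and> d \<le> - w * (x s \<bullet> (P *v x s) / (V0 * exp (- \<beta> * (s - l))))
      + 2 * norm2 (P ** M) * E0 / (sqrt (lam_min P) * sqrt V0) * exp ((\<alpha> + \<beta> / 2) * (s - l))
        * sqrt (x s \<bullet> (P *v x s) / (V0 * exp (- \<beta> * (s - l))))"
    using lyapunov_ratio_derivative_bound[where x = x and e = e and s = s and l = l and \<beta> = \<beta>,
        OF P Q lyap V0 E0 dx[OF s] e[OF s]]
    unfolding w_def by blast
qed

section \<open>The closed loop during a blackout\<close>

lemma mexp_flow_between_updates:
  fixes y :: "real \<Rightarrow> real^'n"
  assumes flow: "\<And>s. a \<le> s \<Longrightarrow> s < b \<Longrightarrow> y s = mexp ((s - a) *\<^sub>R M) *v y a"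
  shows "continuous_on {a..<b} y"
    and "a \<le> s \<Longrightarrow> s < b \<Longrightarrow> (y has_vector_derivative M *v y s) (at s within {s..})"
proof -
  define F where "F s = mexp ((s - a) *\<^sub>R M) *v y a" for s
  have dF: "(F has_vector_derivative M *v F s) (at s within S)" for s S
    unfolding F_def by (rule mexp_flow_has_vector_derivative)
  have "continuous_on {a..<b} F"
    by (intro continuous_at_imp_continuous_on ballI has_vector_derivative_continuous[OF dF])
  moreover have "F s = y s" if "s \<in> {a..<b}" for s
    unfolding F_def using that by (intro flow[symmetric]) auto
  ultimately show "continuous_on {a..<b} y"
    by (rule continuous_on_eq)
  assume s: "a \<le> s" "s < b"
  have "(y has_vector_derivative M *v F s) (at s within {s..})"
  proof (rule has_vector_derivative_transform_within[OF dF])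
    show "0 < b - s" "s \<in> {s..}" using s by auto
    fix s' assume "s' \<in> {s..}" "dist s' s < b - s"
    then show "F s' = y s'"
      unfolding F_def using s by (intro flow[symmetric]) (auto simp: dist_real_def)
  qed
  moreover have "F s = y s"
    unfolding F_def using s by (intro flow[symmetric]) auto
  ultimately show "(y has_vector_derivative M *v y s) (at s within {s..})"
    by simp
qed

lemma error_dynamics_between_updates:
  fixes A :: "real^'n^'n" and B :: "real^'m^'n" and K :: "real^'n^'m" and x xh :: "real \<Rightarrow> real^'n"
  assumes x_cont: "continuous_on {l..u} x"
    and x_ode: "\<And>s. l \<le> s \<Longrightarrow> s < u \<Longrightarrow>
      (x has_vector_derivative A *v x s + B *v (K *v xh s)) (at s within {s..})"
    and flow: "\<And>s. a \<le> s \<Longrightarrow> s < b \<Longrightarrow> xh s = mexp ((s - a) *\<^sub>R (A + B ** K)) *v xh a"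
    and al: "a \<le> l" and ub: "u < b" and start: "norm (x l - xh l) \<le> E0"
  shows "\<And>s. l \<le> s \<Longrightarrow> s < u \<Longrightarrow> (x has_vector_derivative
      (A + B ** K) *v x s - (B ** K) *v (x s - xh s)) (at s within {s..})"
    and "\<And>s. l \<le> s \<Longrightarrow> s < u \<Longrightarrow> norm (x s - xh s) \<le> E0 * exp (norm2 A * (s - l))"
proof -
  note xh_flow = mexp_flow_between_updates[of a b xh, OF flow]
  show "(x has_vector_derivative (A + B ** K) *v x s - (B ** K) *v (x s - xh s)) (at s within {s..})"
    if "l \<le> s" "s < u" for s
    using x_ode[OF that]
    by (simp add: matrix_vector_mult_add_rdistrib matrix_vector_mult_diff_distrib
        matrix_vector_mul_assoc)
  have "((\<lambda>s. x s - xh s) has_vector_derivative A *v (x s - xh s)) (at s within {s..})"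
    if "l \<le> s" "s < u" for s
    using has_vector_derivative_diff[OF x_ode[OF that] xh_flow(2)] that al ub
    by (simp add: matrix_vector_mult_add_rdistrib matrix_vector_mult_diff_distrib
        matrix_vector_mul_assoc)
  moreover have "continuous_on {l..u} (\<lambda>s. x s - xh s)"
    using al ub by (intro continuous_intros x_cont continuous_on_subset[OF xh_flow(1)]) auto
  ultimately have "norm (x s - xh s) \<le> exp (norm2 A * (s - l)) * norm (x l - xh l)"
    if "l \<le> s" "s < u" for s
    using linear_ode_norm_le_exp[of l u "\<lambda>s. x s - xh s" A s] that by auto
  then show "norm (x s - xh s) \<le> E0 * exp (norm2 A * (s - l))" if "l \<le> s" "s < u" for s
    using mult_left_mono[OF start, of "exp (norm2 A * (s - l))"] that
    by (fastforce simp: mult.commute intro: order_trans)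
qed

lemma norminf_mexp_shift_le:
  assumes lu: "l \<le> u" and nonneg: "0 \<le> norminf (mexp ((l - \<tau>) *\<^sub>R A)) * \<delta>"
  shows "norminf (mexp ((u - \<tau>) *\<^sub>R A)) * \<delta>
    \<le> exp ((u - l) * norminf A) * (norminf (mexp ((l - \<tau>) *\<^sub>R A)) * \<delta>)"
proof -
  have \<delta>: "0 \<le> \<delta>"
    using nonneg norminf_mexp_pos[of "(l - \<tau>) *\<^sub>R A"] by (auto simp: zero_le_mult_iff)
  have "mexp ((u - \<tau>) *\<^sub>R A) = mexp ((u - l) *\<^sub>R A) ** mexp ((l - \<tau>) *\<^sub>R A)"
    by (simp add: mexp_add_scaleR)
  then have "norminf (mexp ((u - \<tau>) *\<^sub>R A))
      \<le> norminf (mexp ((u - l) *\<^sub>R A)) * norminf (mexp ((l - \<tau>) *\<^sub>R A))"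
    by (simp add: norminf_mult)
  also have "\<dots> \<le> exp ((u - l) * norminf A) * norminf (mexp ((l - \<tau>) *\<^sub>R A))"
    using norminf_mexp_le[of "(u - l) *\<^sub>R A"] lu
    by (intro mult_right_mono) (simp_all add: norminf_scaleR norminf_nonneg)
  finally show ?thesis using \<delta> by (metis mult.assoc mult_right_mono)
qed

lemma normalized_error_after_blackout_le_one:
  fixes A :: "real^'n^'n"
  assumes lu: "l \<le> u" and nonneg: "0 \<le> norminf (mexp ((l - \<tau>) *\<^sub>R A)) * \<delta>"
    and c: "0 \<le> c" and V0: "0 < V0"
    and start: "norminf (mexp ((l - \<tau>) *\<^sub>R A)) * \<delta> / (c * sqrt V0)
      \<le> exp (- (norminf A + \<beta> / 2) * (u - l))"
  shows "norminf (mexp ((u - \<tau>) *\<^sub>R A)) * \<delta> / (c * sqrt (V0 * exp (- \<beta> * (u - l)))) \<le> 1"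
proof (cases "c = 0")
  case False
  define de_l de_u where "de_l = norminf (mexp ((l - \<tau>) *\<^sub>R A)) * \<delta>"
    and "de_u = norminf (mexp ((u - \<tau>) *\<^sub>R A)) * \<delta>"
  have pos: "0 < c * sqrt V0" using False c V0 by simp
  have "sqrt (V0 * exp (- \<beta> * (u - l))) * exp (\<beta> * (u - l) / 2) = sqrt V0"
    by (simp add: real_sqrt_mult sqrt_exp mult.assoc flip: exp_add)
  then have "sqrt (V0 * exp (- \<beta> * (u - l))) = sqrt V0 / exp (\<beta> * (u - l) / 2)"
    by (simp add: field_simps)
  then have "de_u / (c * sqrt (V0 * exp (- \<beta> * (u - l))))
      = exp (\<beta> * (u - l) / 2) * (de_u / (c * sqrt V0))"
    by simp
  also have "\<dots> \<le> exp (\<beta> * (u - l) / 2) * (exp ((u - l) * norminf A) * (de_l / (c * sqrt V0)))"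
    using norminf_mexp_shift_le[OF lu nonneg] pos
    by (simp add: de_l_def de_u_def divide_right_mono)
  also have "\<dots> \<le> exp (\<beta> * (u - l) / 2) * (exp ((u - l) * norminf A)
      * exp (- (norminf A + \<beta> / 2) * (u - l)))"
    using start by (intro mult_left_mono) (auto simp: de_l_def)
  also have "\<dots> = 1" by (simp add: algebra_simps flip: exp_add)
  finally show ?thesis by (simp add: de_u_def)
qed simp

text \<open>The constant \<open>c\<close> of the theorem is chosen so that the forcing gain of the Lyapunov bound
  is \<open>W \<epsilon>\<close>.\<close>

lemma normalized_gain_eq:
  fixes W lP V N n d :: real
  assumes "0 < W" "0 < lP" "0 < V"
  shows "2 * N * (sqrt n * d) / (sqrt lP * sqrt V)
    = W * (d / (W * sqrt lP / (2 * sqrt n * N) * sqrt V))"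
  using assms by (cases "N = 0"; cases "n = 0") (auto simp: field_simps)

lemma blackout_bounds:
  assumes "\<exists>s\<ge>t. pbar s = 0" and "\<exists>s\<ge>tau_l pbar t. pbar s > 0"
  shows "t \<le> tau_l pbar t" and "tau_l pbar t \<le> tau_u pbar t"
  using assms unfolding tau_u_def tau_l_def by (auto intro!: cInf_greatest)

lemma update_interval_covering:
  fixes r :: "nat \<Rightarrow> real"
  assumes r0: "r 0 \<le> l" and r_unbounded: "filterlim r at_top sequentially"
    and no_update: "\<And>k. r k \<notin> {l<..u}"
  obtains k where "r k \<le> l" "u < r (Suc k)"
proof -
  obtain N where "l < r N"
    using r_unbounded unfolding filterlim_at_top_dense eventually_sequentially by blast
  have "\<exists>k. r k \<le> l \<and> \<not> r (Suc k) \<le> l" if "\<not> r n \<le> l" for n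
    using that by (induction n) (use r0 in auto)
  from this[of N] \<open>l < r N\<close> obtain k where "r k \<le> l" "l < r (Suc k)"
    by (auto simp: not_le)
  moreover have "u < r (Suc k)" using no_update[of "Suc k"] \<open>l < r (Suc k)\<close> by force
  ultimately show ?thesis using that by blast
qed


theorem lemma10:
  fixes A :: "real^'n^'n" and B :: "real^'m^'n" and K :: "real^'n^'m"
    and Q P :: "real^'n^'n"
    and t0 Vd0 \<beta> a T :: real
    and x xh :: "real \<Rightarrow> real^'n"
    and r :: "nat \<Rightarrow> real"      \<comment> \<open>controller update times \<tilde>r_k\<close>
    and tk :: "nat \<Rightarrow> real"     \<comment> \<open>packet transmission times t_k\<close>
    and p :: "nat \<Rightarrow> nat"       \<comment> \<open>packet sizes p_k (packet has n p_k bits)\<close>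
    and \<delta> :: "nat \<Rightarrow> real"
    and de :: "real \<Rightarrow> real"
    and pbar :: "real \<Rightarrow> nat" and \<theta> :: "nat \<Rightarrow> real"
    and t :: real
  defines "Abar \<equiv> A + B ** K"
  defines "V \<equiv> \<lambda>z::real^'n. z \<bullet> (P *v z)"
    and "Vd \<equiv> \<lambda>s. Vd0 * exp (- \<beta> * (s - t0))"
    and "W \<equiv> lam_min Q / lam_max P - a * \<beta>"
    and "w \<equiv> lam_min Q / lam_max P - \<beta>"
    and "\<mu> \<equiv> norm2 A + \<beta> / 2"
    and "\<mu>bar \<equiv> norminf A + \<beta> / 2"
  defines "c \<equiv> W * sqrt (lam_min P) / (2 * sqrt (real CARD('n)) * norm2 (P ** B ** K))"
  defines "\<rho> \<equiv> \<lambda>h0. (w + \<mu>) * (1 - h0) / (W * (exp ((w + \<mu>) * T) - 1)) + 1"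
  defines "hpf \<equiv> \<lambda>s. V (x s) / Vd s"
    and "\<epsilon> \<equiv> \<lambda>s. de s / (c * sqrt (Vd s))"
  defines "hch \<equiv> \<lambda>s. \<epsilon> s / \<rho> (hpf s)"
  defines "Tb \<equiv> T_b pbar t"
  defines "\<epsilon>r \<equiv> min ((exp (w * Tb) - 1) * (w + \<mu>) / (W * (exp ((w + \<mu>) * Tb) - 1)))
                    (exp (- \<mu>bar * Tb))"
  assumes hurwitz: "hurwitz Abar"
    and Q_pd: "pos_def Q" and P_pd: "pos_def P"
    and lyap: "P ** Abar + transpose Abar ** P = - Q"
    and t0: "t0 \<ge> 0" and Vd0: "Vd0 > 0" and beta: "\<beta> > 0" and a: "a > 1"
    and W_pos: "W > 0" and T_pos: "T > 0"
    \<comment> \<open>plant \<open>x' = A x + B u\<close>, \<open>u = K xh\<close> (right derivative; x continuous)\<close>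
    and x_cont: "continuous_on {t0..} x"
    and x_ode: "\<And>s. s \<ge> t0 \<Longrightarrow>
        (x has_vector_derivative (A *v x s + B *v (K *v xh s))) (at s within {s..})"
    \<comment> \<open>controller update times and xh' = Abar xh between them\<close>
    and r_mono: "strict_mono r" and r0: "r 0 \<le> t0"
    and r_unbounded: "filterlim r at_top sequentially"
    and xh_flow: "\<And>k s. r k \<le> s \<Longrightarrow> s < r (Suc k) \<Longrightarrow>
        xh s = mexp ((s - r k) *\<^sub>R Abar) *v xh (r k)"
    \<comment> \<open>transmission times and the error bound d_e\<close>
    and tk_le: "\<And>k. tk k \<le> r k"
    and de_def: "\<And>k s. r k \<le> s \<Longrightarrow> s < r (Suc k) \<Longrightarrow>
        de s = norminf (mexp ((s - tk k) *\<^sub>R A)) * \<delta> k"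
    and delta_rec: "\<And>k. \<delta> (Suc k) = 2 powr (- real (p (Suc k))) * de (tk (Suc k))"
    \<comment> \<open>channel: pbar constant on slots (\<theta> j, \<theta> (j+1)]\<close>
    and theta_mono: "strict_mono \<theta>" and theta0: "\<theta> 0 = 0"
    and theta_unbounded: "filterlim \<theta> at_top sequentially"
    and pbar_slots: "\<And>j s s'. s \<in> {\<theta> j<..\<theta> (Suc j)} \<Longrightarrow> s' \<in> {\<theta> j<..\<theta> (Suc j)} \<Longrightarrow>
        pbar s = pbar s'"
    \<comment> \<open>the next blackout after t exists and ends\<close>
    and blackout_ex: "\<exists>s\<ge>t. pbar s = 0"
    and blackout_end: "\<exists>s\<ge>tau_l pbar t. pbar s > 0"
    \<comment> \<open>hypotheses of the lemma\<close>
    and t_ge: "t \<ge> t0"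
    and no_update: "\<And>k. r k \<notin> {tau_l pbar t<..tau_u pbar t}"
    and err_bound: "\<And>s. s \<ge> t0 \<Longrightarrow> infnorm (x s - xh s) \<le> de s"
    and eps_l: "\<epsilon> (tau_l pbar t) \<le> \<epsilon>r"
    and hpf_l: "hpf (tau_l pbar t) \<le> 1"
  shows "(\<forall>s\<in>{tau_l pbar t..tau_u pbar t}. hpf s \<le> 1)
         \<and> hch (tau_u pbar t) \<le> 1 \<and> \<epsilon> (tau_u pbar t) \<le> 1"
proof -
  define l u where "l = tau_l pbar t" and "u = tau_u pbar t"
  have "t \<le> l" and lu: "l \<le> u"
    using blackout_bounds[OF blackout_ex blackout_end] by (simp_all add: l_def u_def)
  then have t0l: "t0 \<le> l" using t_ge by simp
  obtain k where k: "r k \<le> l" "u < r (Suc k)"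
    using update_interval_covering[OF _ r_unbounded no_update[folded l_def u_def]] r0 t0l by force
  have x_cont': "continuous_on {l..u} x"
    using x_cont by (rule continuous_on_subset) (use t0l in auto)
  have x_ode': "(x has_vector_derivative A *v x s + B *v (K *v xh s)) (at s within {s..})"
    if "l \<le> s" for s
    using x_ode t0l that by simp
  have de_l: "0 \<le> de l" "norm (x l - xh l) \<le> sqrt (real CARD('n)) * de l"
    using err_bound[OF t0l] norm_le_infnorm[of "x l - xh l"] infnorm_pos_le[of "x l - xh l"]
    by (auto intro: order_trans)
  note dynamics = error_dynamics_between_updates[OF x_cont' x_ode' xh_flow[unfolded Abar_def] k
      de_l(2), folded Abar_def]
  have Vd_shift: "Vd s = Vd l * exp (- \<beta> * (s - l))" for s
    by (simp add: Vd_def mult.assoc algebra_simps flip: exp_add)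
  have Vd_l: "0 < Vd l" using Vd0 by (simp add: Vd_def)
  have Tb: "Tb = u - l" unfolding Tb_def T_b_def l_def u_def ..
  have w_pos: "0 < w" using W_pos a beta unfolding w_def W_def
    by (smt (verit) mult_less_cancel_right2)
  have "2 * norm2 (P ** (B ** K)) * (sqrt (real CARD('n)) * de l) / (sqrt (lam_min P) * sqrt (Vd l))
      = W * \<epsilon> l"
    using normalized_gain_eq[OF W_pos pos_def_lam_min_pos[OF P_pd] Vd_l]
    by (simp add: \<epsilon>_def c_def matrix_mul_assoc)
  also have "\<dots> \<le> W * ((exp (w * (u - l)) - 1) * (w + \<mu>) / (W * (exp ((w + \<mu>) * (u - l)) - 1)))"
    using eps_l W_pos by (intro mult_left_mono) (auto simp: \<epsilon>r_def Tb l_def)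
  finally have gain: "2 * norm2 (P ** (B ** K)) * (sqrt (real CARD('n)) * de l)
      / (sqrt (lam_min P) * sqrt (Vd l))
    \<le> (exp (w * (u - l)) - 1) * (w + \<mu>) / (exp ((w + \<mu>) * (u - l)) - 1)"
    using W_pos by simp
  have "0 \<le> sqrt (real CARD('n)) * de l" "0 < lam_min Q / lam_max P - \<beta>"
    "x l \<bullet> (P *v x l) / Vd l \<le> 1"
    using de_l(1) w_pos hpf_l by (simp_all add: w_def hpf_def V_def l_def)
  then have "\<forall>s\<in>{l..u}. x s \<bullet> (P *v x s) / (Vd l * exp (- \<beta> * (s - l))) \<le> 1"
    using lyapunov_ratio_le_one[OF P_pd Q_pd lyap Vd_l _ norm2_nonneg less_imp_le[OF beta] _
        x_cont' dynamics _ gain[unfolded w_def \<mu>_def]] by blast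
  moreover have "hpf s = x s \<bullet> (P *v x s) / (Vd l * exp (- \<beta> * (s - l)))" for s
    by (simp add: hpf_def V_def Vd_shift[of s])
  ultimately have hpf_le: "\<forall>s\<in>{l..u}. hpf s \<le> 1" by simp
  have "\<epsilon> u \<le> 1"
    using normalized_error_after_blackout_le_one[OF lu _ _ Vd_l, of "tk k" A "\<delta> k" c \<beta>]
      de_def[of k l] de_def[of k u] k lu de_l(1) eps_l W_pos
      pos_def_lam_min_pos[OF P_pd] norm2_nonneg[of "P ** B ** K"]
    by (simp add: \<epsilon>_def \<epsilon>r_def Tb \<mu>bar_def c_def Vd_shift[of u] l_def[symmetric])
  moreover have "1 \<le> \<rho> (hpf u)"
  proof -
    have "0 < w + \<mu>" using w_pos beta norm2_nonneg[of A] by (simp add: \<mu>_def)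
    then show ?thesis
      using hpf_le lu W_pos T_pos unfolding \<rho>_def
      by (auto intro!: divide_nonneg_pos mult_nonneg_nonneg mult_pos_pos)
  qed
  ultimately show ?thesis
    using hpf_le unfolding hch_def l_def u_def by (auto simp: divide_le_eq)
qed

end
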